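(* Assume the standing hypotheses described in the context, with $\hat\ell_1(x,0,w)=0$ for all $(x,w)$. Let $(\bar S,\bar w^0,\bar w,\bar\alpha,\bar y^0,\bar y,\bar\beta)$ be a canonical local minimizer of the space-time problem with $\bar\beta(\bar S)<K$, let $\Gamma$ be a Boltyanski approximating cone of $\mathfrak T$ at $(\bar y^0,\bar y)(\bar S)$, and let $(p_0,p,\pi,\lambda)$, with $\pi=0$, be a multiplier satisfying conditions (MP) and (HO) of the context. Then for every $B\in\mathfrak B^1\cup\{g_1,\dots,g_{m_1}\}$ and a.e. $s\in[0,\bar S]$, $$p(s)\cdot\Big([f_{\bar\alpha(s)},B](\bar y(s))\,\bar w^0(s)+\sum_{j=m_1+1}^m[g_j,B](\bar y(s))\,\bar w^j(s)\Big)=-\lambda\frac{\partial\ell^e}{\partial x}(\bar y(s),\bar w^0(s),\bar w(s),\bar\alpha(s))\cdot B(\bar y(s)),$$ where $f_a:=f(\cdot,a)$. In particular, if $m_1=m$ and $\lambda\frac{\partial\ell^e}{\partial x}(\bar y(s),\bar w^0(s),\bar w(s),\bar\alpha(s))\cdot B(\bar y(s))=0$ for a.e. $s\in[0,\bar S]$, then $p(s)\cdot[f_{\bar\alpha(s)},B](\bar y(s))\,\bar w^0(s)=0$ for a.e. $s\in[0,\bar S]$.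
   Context: Let $n,m,q\ge1$, $m=m_1+m_2$. Standing hypotheses: $\mathfrak T\subset\mathbb{R}_+\times\mathbb{R}^n$ closed; $A\subset\mathbb{R}^q$ compact; $\mathcal C=\mathcal C_1\times\mathcal C_2\subseteq\mathbb{R}^m$, $\mathcal C_1\subseteq\mathbb{R}^{m_1}$ a closed cone containing the lines $\mathbb{R}\mathbf e_i$, $i\le m_1$, $\mathcal C_2\subseteq\mathbb{R}^{m_2}$ a closed cone containing no line; $f:\mathbb{R}^n\times A\to\mathbb{R}^n$ continuous with continuous $x$-partials; $g_1,\dots,g_m$ of class $C^1$; $\ell(x,u,a)=\ell_0(x,a)+\ell_1(x,u)$ with $\ell_0$ and $\hat\ell_1(x,w^0,w):=\lim_{r\to w^0}r\ell_1(x,w/r)$ continuous with continuous $x$-partials; $\Psi$ of class $C^1$; $K\in(0,\infty]$, $\check x\in\mathbb{R}^n$; $\ell^e(x,w^0,w,a)=\ell_0(x,a)w^0+\hat\ell_1(x,w^0,w)$. Space-time process, feasibility, cost, canonical, local minimizer: $S>0$, $(w^0,w,\alpha)\in L^\infty([0,S],\mathbb{R}_+\times\mathcal C\times A)$, $\operatorname{ess\,inf}(w^0+|w|)>0$, $\dot y^0=w^0$, $\dot y=f(y,\alpha)w^0+\sum_ig_i(y)w^i$, $\dot\beta=|w|$, $(y^0,y,\beta)(0)=(0,\check x,0)$; feasible if $(y^0(S),y(S))\in\mathfrak T$, $\beta(S)\le K$; cost $\Psi(y^0(S),y(S))+\int_0^S\ell^e(y,w^0,w,\alpha)ds$; canonical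 if $w^0+|w|=1$ a.e.; local minimizer if its cost is $\le$ that of all feasible processes with $|S-\bar S|+\sup_{s\ge0}|\tilde z-\tilde{\bar z}|<\delta$ for some $\delta>0$ ($z=(y^0,y,\beta)$, $\tilde z$ constant extension to $\mathbb{R}_+$). Boltyanski approximating cone and polar $X^\perp=\{p:p\cdot x\le0\ \forall x\in X\}$ as usual: a convex cone $LC$ with $C$ a convex cone, $L$ linear, and continuous $F:V\cap C\to Z$, $F(v)=z+Lv+o(|v|)$. $H(x,p_0,p,\pi,\lambda,w^0,w,a)=p_0w^0+p\cdot(f(x,a)w^0+\sum_ig_i(x)w^i)+\pi|w|-\lambda\ell^e$; $\mathbf H=\max$ over $\{(w^0,w)\in\mathbb{R}_+\times\mathcal C:w^0+|w|=1\}\times A$. (MP): $(p_0,p,\pi,\lambda)\in\mathbb{R}\times AC([0,\bar S],\mathbb{R}^n)\times(-\infty,0]\times[0,\infty)$ with $(p_0,p,\lambda)\ne0$; $(p_0,p(\bar S))\in-\lambda\nabla_{(t,x)}\Psi((\bar y^0,\bar y)(\bar S))-\Gamma^\perp$; $\dot p=-\partial_xH(\bar y,p_0,p,\pi,\lambda,\bar w^0,\bar w,\bar\alpha)$ a.e.; $H(\bar y,\dots,\bar\alpha)=\mathbf H(\bar y,p_0,p,\pi,\lambda)$ a.e.; $\mathbf H(\bar y(s),p_0,p(s),\pi,\lambda)=0$ for all $s$. (HO): $p(s)\cdot g_i(\bar y(s))=0$ for all $s$, $i\le m_1$, and $p(s)\cdot B(\bar y(s))=0$ for all $s$ and $B\in\mathfrak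 B^0$. Lie bracket convention: $[V,W](x)=DW(x)V(x)-DV(x)W(x)$. Admissible brackets $\mathfrak B^k$: formal brackets in distinct indeterminates $X_1,\dots,X_q$ (each appearing once) built recursively ($X_j$ are brackets; $[b_1,b_2]$ is a bracket); $\mathfrak d(b;b)=0$, $\mathfrak d(S_1;b)=\mathfrak d(S_2;b)=1+\mathfrak d([S_1,S_2];b)$; $(F_1,\dots,F_q)$ is of class $C^{b+k}$ if $F_j\in C^{\mathfrak d(X_j;b)+k}$; $\mathfrak B^k$ is the set of vector fields $b(F_1,\dots,F_q)$ (substitute $F_j$ for $X_j$, brackets become Lie brackets) with $q\ge2$, $F_j\in\{g_1,\dots,g_{m_1}\}$, and $(F_1,\dots,F_q)$ of class $C^{b+k}$. *)

theory Defs
  imports "HOL-Analysis.Analysis"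
begin

definition ac_on :: "real \<Rightarrow> real \<Rightarrow> (real \<Rightarrow> 'b::real_normed_vector) \<Rightarrow> bool" where
  "ac_on a b y \<longleftrightarrow>
     (\<forall>\<epsilon>>0. \<exists>\<delta>>0. \<forall>(N::nat) (u::nat \<Rightarrow> real) (v::nat \<Rightarrow> real).
        (\<forall>i<N. a \<le> u i \<and> u i \<le> v i \<and> v i \<le> b) \<and>
        (\<forall>i<N. \<forall>j<N. i \<noteq> j \<longrightarrow> v i \<le> u j \<or> v j \<le> u i) \<and>
        (\<Sum>i<N. v i - u i) < \<delta>
        \<longrightarrow> (\<Sum>i<N. norm (y (v i) - y (u i))) < \<epsilon>)"

fun dderiv :: "'a list \<Rightarrow> ('a::real_normed_vector \<Rightarrow> 'b::real_normed_vector) \<Rightarrow> 'a \<Rightarrow> 'b" where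
  "dderiv [] F = F"
| "dderiv (v # vs) F = (\<lambda>x. frechet_derivative (dderiv vs F) (at x) v)"

definition Ck :: "nat \<Rightarrow> ('a::euclidean_space \<Rightarrow> 'b::real_normed_vector) \<Rightarrow> bool" where
  "Ck k F \<longleftrightarrow>
     (\<forall>vs. set vs \<subseteq> Basis \<longrightarrow>
        (length vs < k \<longrightarrow> (\<forall>x. dderiv vs F differentiable (at x))) \<and>
        (length vs \<le> k \<longrightarrow> continuous_on UNIV (dderiv vs F)))"

definition lie_bracket :: "('a::real_normed_vector \<Rightarrow> 'a) \<Rightarrow> ('a \<Rightarrow> 'a) \<Rightarrow> 'a \<Rightarrow> 'a" where
  "lie_bracket V W x = frechet_derivative W (at x) (V x) - frechet_derivative V (at x) (W x)"

text \<open>Formal brackets; each leaf is one occurrence of an indeterminate, labelled by the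
  index of the vector field substituted for it.\<close>
datatype 'i fbracket = Ind 'i | Br "'i fbracket" "'i fbracket"

text \<open>Leaves together with their depth d(X_j; b) (distance to the root).\<close>
fun leaf_depths :: "'i fbracket \<Rightarrow> ('i \<times> nat) list" where
  "leaf_depths (Ind i) = [(i, 0)]"
| "leaf_depths (Br b1 b2) = map (\<lambda>(i, d). (i, Suc d)) (leaf_depths b1 @ leaf_depths b2)"

fun bracket_eval :: "('i \<Rightarrow> 'a::real_normed_vector \<Rightarrow> 'a) \<Rightarrow> 'i fbracket \<Rightarrow> 'a \<Rightarrow> 'a" where
  "bracket_eval g (Ind i) = g i"
| "bracket_eval g (Br b1 b2) = lie_bracket (bracket_eval g b1) (bracket_eval g b2)"

text \<open>The set B^k of admissible brackets of the fields g_i, i in I1 (at least two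
  indeterminates, i.e. the bracket is not a single leaf).\<close>
definition adm_brackets :: "nat \<Rightarrow> 'i set \<Rightarrow> ('i \<Rightarrow> 'a::euclidean_space \<Rightarrow> 'a) \<Rightarrow> ('a \<Rightarrow> 'a) set" where
  "adm_brackets k I g =
     {bracket_eval g b | b. (\<exists>b1 b2. b = Br b1 b2) \<and>
        (\<forall>(i, d) \<in> set (leaf_depths b). i \<in> I \<and> Ck (d + k) (g i))}"

definition ell_e :: "('x \<Rightarrow> 'a \<Rightarrow> real) \<Rightarrow> ('x \<Rightarrow> real \<Rightarrow> 'w \<Rightarrow> real)
    \<Rightarrow> 'x \<Rightarrow> real \<Rightarrow> 'w \<Rightarrow> 'a \<Rightarrow> real" where
  "ell_e l0 l1h x w0 w a = l0 x a * w0 + l1h x w0 w"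

definition Hfun :: "(real^'n \<Rightarrow> 'a \<Rightarrow> real^'n) \<Rightarrow> ('m::finite \<Rightarrow> real^'n \<Rightarrow> real^'n)
    \<Rightarrow> (real^'n \<Rightarrow> 'a \<Rightarrow> real) \<Rightarrow> (real^'n \<Rightarrow> real \<Rightarrow> real^'m \<Rightarrow> real)
    \<Rightarrow> real^'n \<Rightarrow> real \<Rightarrow> real^'n \<Rightarrow> real \<Rightarrow> real \<Rightarrow> real \<Rightarrow> real^'m \<Rightarrow> 'a \<Rightarrow> real" where
  "Hfun f g l0 l1h x p0 p \<pi> lam w0 w a =
     p0 * w0 + p \<bullet> (w0 *\<^sub>R f x a + (\<Sum>i\<in>UNIV. (w $ i) *\<^sub>R g i x)) + \<pi> * norm w
     - lam * ell_e l0 l1h x w0 w a"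

definition Hmax :: "(real^'n \<Rightarrow> 'a \<Rightarrow> real^'n) \<Rightarrow> ('m::finite \<Rightarrow> real^'n \<Rightarrow> real^'n)
    \<Rightarrow> (real^'n \<Rightarrow> 'a \<Rightarrow> real) \<Rightarrow> (real^'n \<Rightarrow> real \<Rightarrow> real^'m \<Rightarrow> real)
    \<Rightarrow> (real^'m) set \<Rightarrow> 'a set
    \<Rightarrow> real^'n \<Rightarrow> real \<Rightarrow> real^'n \<Rightarrow> real \<Rightarrow> real \<Rightarrow> real" where
  "Hmax f g l0 l1h Cs A x p0 p \<pi> lam =
     Sup ((\<lambda>(w0, w, a). Hfun f g l0 l1h x p0 p \<pi> lam w0 w a) `
          {(w0, w, a). 0 \<le> w0 \<and> w \<in> Cs \<and> w0 + norm w = 1 \<and> a \<in> A})"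

definition st_process :: "(real^'n \<Rightarrow> 'a::euclidean_space \<Rightarrow> real^'n) \<Rightarrow> ('m::finite \<Rightarrow> real^'n \<Rightarrow> real^'n)
    \<Rightarrow> (real^'m) set \<Rightarrow> 'a set \<Rightarrow> real^'n
    \<Rightarrow> real \<Rightarrow> (real \<Rightarrow> real) \<Rightarrow> (real \<Rightarrow> real^'m) \<Rightarrow> (real \<Rightarrow> 'a)
    \<Rightarrow> (real \<Rightarrow> real) \<Rightarrow> (real \<Rightarrow> real^'n) \<Rightarrow> (real \<Rightarrow> real) \<Rightarrow> bool" where
  "st_process f g Cs A xc S w0 w \<alpha> y0 y \<beta> \<longleftrightarrow>
     0 < S \<and>
     w0 \<in> borel_measurable (lebesgue_on {0..S}) \<and>
     w \<in> borel_measurable (lebesgue_on {0..S}) \<and>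
     \<alpha> \<in> borel_measurable (lebesgue_on {0..S}) \<and>
     (\<exists>M. AE s in lebesgue_on {0..S}. \<bar>w0 s\<bar> \<le> M \<and> norm (w s) \<le> M \<and> norm (\<alpha> s) \<le> M) \<and>
     (AE s in lebesgue_on {0..S}. 0 \<le> w0 s \<and> w s \<in> Cs \<and> \<alpha> s \<in> A) \<and>
     (\<exists>c>0. AE s in lebesgue_on {0..S}. c \<le> w0 s + norm (w s)) \<and>
     ac_on 0 S y0 \<and> ac_on 0 S y \<and> ac_on 0 S \<beta> \<and>
     y0 0 = 0 \<and> y 0 = xc \<and> \<beta> 0 = 0 \<and>
     (AE s in lebesgue_on {0..S}.
        (y0 has_real_derivative w0 s) (at s within {0..S}) \<and>
        (y has_vector_derivative (w0 s *\<^sub>R f (y s) (\<alpha> s) + (\<Sum>i\<in>UNIV. (w s $ i) *\<^sub>R g i (y s))))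
           (at s within {0..S}) \<and>
        (\<beta> has_real_derivative norm (w s)) (at s within {0..S}))"

definition st_feasible :: "(real \<times> (real^'n)) set \<Rightarrow> ereal
    \<Rightarrow> real \<Rightarrow> (real \<Rightarrow> real) \<Rightarrow> (real \<Rightarrow> real^'n) \<Rightarrow> (real \<Rightarrow> real) \<Rightarrow> bool" where
  "st_feasible T K S y0 y \<beta> \<longleftrightarrow> (y0 S, y S) \<in> T \<and> ereal (\<beta> S) \<le> K"

definition st_cost :: "(real \<times> (real^'n) \<Rightarrow> real) \<Rightarrow> (real^'n \<Rightarrow> 'a \<Rightarrow> real)
    \<Rightarrow> (real^'n \<Rightarrow> real \<Rightarrow> real^'m \<Rightarrow> real)
    \<Rightarrow> real \<Rightarrow> (real \<Rightarrow> real) \<Rightarrow> (real \<Rightarrow> real^'m) \<Rightarrow> (real \<Rightarrow> 'a)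
    \<Rightarrow> (real \<Rightarrow> real) \<Rightarrow> (real \<Rightarrow> real^'n) \<Rightarrow> real" where
  "st_cost Psi l0 l1h S w0 w \<alpha> y0 y =
     Psi (y0 S, y S) + integral\<^sup>L (lebesgue_on {0..S}) (\<lambda>s. ell_e l0 l1h (y s) (w0 s) (w s) (\<alpha> s))"

text \<open>Distance |S - S'| + sup_{s>=0} |z~(s) - z'~(s)|, z~ the constant extension.\<close>
definition st_dist :: "real \<Rightarrow> (real \<Rightarrow> real) \<Rightarrow> (real \<Rightarrow> real^'n) \<Rightarrow> (real \<Rightarrow> real)
    \<Rightarrow> real \<Rightarrow> (real \<Rightarrow> real) \<Rightarrow> (real \<Rightarrow> real^'n) \<Rightarrow> (real \<Rightarrow> real) \<Rightarrow> real" where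
  "st_dist S y0 y \<beta> S' y0' y' \<beta>' =
     \<bar>S - S'\<bar> + (SUP s\<in>{0..}. norm ((y0 (min s S), y (min s S), \<beta> (min s S))
                                   - (y0' (min s S'), y' (min s S'), \<beta>' (min s S'))))"

definition st_local_min :: "(real^'n \<Rightarrow> 'a::euclidean_space \<Rightarrow> real^'n) \<Rightarrow> ('m::finite \<Rightarrow> real^'n \<Rightarrow> real^'n)
    \<Rightarrow> (real^'m) set \<Rightarrow> 'a set \<Rightarrow> real^'n \<Rightarrow> (real \<times> (real^'n)) set \<Rightarrow> ereal
    \<Rightarrow> (real \<times> (real^'n) \<Rightarrow> real) \<Rightarrow> (real^'n \<Rightarrow> 'a \<Rightarrow> real) \<Rightarrow> (real^'n \<Rightarrow> real \<Rightarrow> real^'m \<Rightarrow> real)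
    \<Rightarrow> real \<Rightarrow> (real \<Rightarrow> real) \<Rightarrow> (real \<Rightarrow> real^'m) \<Rightarrow> (real \<Rightarrow> 'a)
    \<Rightarrow> (real \<Rightarrow> real) \<Rightarrow> (real \<Rightarrow> real^'n) \<Rightarrow> (real \<Rightarrow> real) \<Rightarrow> bool" where
  "st_local_min f g Cs A xc T K Psi l0 l1h S w0 w \<alpha> y0 y \<beta> \<longleftrightarrow>
     st_process f g Cs A xc S w0 w \<alpha> y0 y \<beta> \<and> st_feasible T K S y0 y \<beta> \<and>
     (\<exists>\<delta>>0. \<forall>S' w0' w' \<alpha>' y0' y' \<beta>'.
        st_process f g Cs A xc S' w0' w' \<alpha>' y0' y' \<beta>' \<and> st_feasible T K S' y0' y' \<beta>' \<and>
        st_dist S' y0' y' \<beta>' S y0 y \<beta> < \<delta>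
        \<longrightarrow> st_cost Psi l0 l1h S w0 w \<alpha> y0 y \<le> st_cost Psi l0 l1h S' w0' w' \<alpha>' y0' y')"

definition canonical :: "real \<Rightarrow> (real \<Rightarrow> real) \<Rightarrow> (real \<Rightarrow> 'w::real_normed_vector) \<Rightarrow> bool" where
  "canonical S w0 w \<longleftrightarrow> (AE s in lebesgue_on {0..S}. w0 s + norm (w s) = 1)"

definition polar_cone :: "'a::real_inner set \<Rightarrow> 'a set" where
  "polar_cone X = {p. \<forall>x\<in>X. p \<bullet> x \<le> 0}"

definition boltyanski_witness :: "'b::real_normed_vector set \<Rightarrow> 'b set \<Rightarrow> 'b
    \<Rightarrow> 'c::euclidean_space set \<Rightarrow> ('c \<Rightarrow> 'b) \<Rightarrow> 'c set \<Rightarrow> ('c \<Rightarrow> 'b) \<Rightarrow> bool" where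
  "boltyanski_witness \<Gamma> Z z C L V F \<longleftrightarrow>
     convex C \<and> cone C \<and> linear L \<and> \<Gamma> = L ` C \<and>
     open V \<and> 0 \<in> V \<and> continuous_on (V \<inter> C) F \<and> F ` (V \<inter> C) \<subseteq> Z \<and>
     (\<forall>\<epsilon>>0. \<exists>\<delta>>0. \<forall>v\<in>V \<inter> C. norm v < \<delta> \<longrightarrow> norm (F v - z - L v) \<le> \<epsilon> * norm v)"

end

theory Submission
  imports Defs
begin

text \<open>By (HO), \<open>s \<mapsto> p(s) \<bullet> B(y(s))\<close> vanishes identically for every \<open>B\<close> in \<open>B^0\<close> and
  every \<open>g_i\<close> with \<open>i \<le> m_1\<close>. For \<open>B\<close> in \<open>B^1\<close> or \<open>B = g_i\<close> the field is \<open>C^1\<close>, so this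
  function can be differentiated along the optimal trajectory: by the state equation and the
  adjoint equation \<open>p' = -\<partial>_x H\<close> its derivative expands to
  \<open>p \<bullet> ([f_\<alpha>, B] w^0 + \<Sum>_j [g_j, B] w^j) + \<lambda> \<partial>_x \<ell>^e \<bullet> B\<close>. The terms with \<open>j \<le> m_1\<close>
  vanish once more by (HO), since \<open>[g_j, B]\<close> lies in \<open>B^0\<close>.\<close>

lemma dderiv_snoc: "dderiv (vs @ [b]) F = dderiv vs (\<lambda>x. frechet_derivative F (at x) b)"
  by (induction vs) auto

lemma Ck_0_iff: "Ck 0 F \<longleftrightarrow> continuous_on UNIV F"
  unfolding Ck_def by auto

lemma Ck_Suc_iff:
  "Ck (Suc k) F \<longleftrightarrow> (\<forall>x. F differentiable (at x)) \<and> continuous_on UNIV F \<and>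
     (\<forall>b\<in>Basis. Ck k (\<lambda>x. frechet_derivative F (at x) b))"
proof
  assume F: "Ck (Suc k) F"
  have "Ck k (\<lambda>x. frechet_derivative F (at x) b)" if "b \<in> Basis" for b
    unfolding Ck_def
  proof (intro allI impI)
    fix vs :: "'a list"
    assume "set vs \<subseteq> Basis"
    with that have "set (vs @ [b]) \<subseteq> Basis" by auto
    from F[unfolded Ck_def, rule_format, OF this]
    show "(length vs < k \<longrightarrow> (\<forall>x. dderiv vs (\<lambda>x. frechet_derivative F (at x) b) differentiable at x)) \<and>
        (length vs \<le> k \<longrightarrow> continuous_on UNIV (dderiv vs (\<lambda>x. frechet_derivative F (at x) b)))"
      by (simp add: dderiv_snoc)
  qed
  with F[unfolded Ck_def, rule_format, of "[]"]
  show "(\<forall>x. F differentiable (at x)) \<and> continuous_on UNIV F \<and>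
      (\<forall>b\<in>Basis. Ck k (\<lambda>x. frechet_derivative F (at x) b))"
    by auto
next
  assume F: "(\<forall>x. F differentiable (at x)) \<and> continuous_on UNIV F \<and>
    (\<forall>b\<in>Basis. Ck k (\<lambda>x. frechet_derivative F (at x) b))"
  show "Ck (Suc k) F"
    unfolding Ck_def
  proof (intro allI impI)
    fix vs :: "'a list"
    assume vs: "set vs \<subseteq> Basis"
    show "(length vs < Suc k \<longrightarrow> (\<forall>x. dderiv vs F differentiable at x)) \<and>
        (length vs \<le> Suc k \<longrightarrow> continuous_on UNIV (dderiv vs F))"
    proof (cases vs rule: rev_cases)
      case Nil
      with F show ?thesis by simp
    next
      case (snoc ws b)
      with vs F have "Ck k (\<lambda>x. frechet_derivative F (at x) b)" "set ws \<subseteq> Basis" by auto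
      from this(1)[unfolded Ck_def, rule_format, OF this(2)] show ?thesis
        using snoc by (simp add: dderiv_snoc)
    qed
  qed
qed

lemma Ck_mono: "Ck k F \<Longrightarrow> j \<le> k \<Longrightarrow> Ck j F"
  unfolding Ck_def by auto

lemma Ck_Suc_differentiable: "Ck (Suc k) F \<Longrightarrow> F differentiable (at x)"
  by (simp add: Ck_Suc_iff)

lemma Ck_const: "Ck k (\<lambda>x. c)"
  by (induction k arbitrary: c) (simp_all add: Ck_0_iff Ck_Suc_iff)

lemma frechet_derivative_add_at:
  "f differentiable (at x) \<Longrightarrow> g differentiable (at x) \<Longrightarrow>
    frechet_derivative (\<lambda>x. f x + g x) (at x) b = frechet_derivative f (at x) b + frechet_derivative g (at x) b"
  by (metis (no_types) frechet_derivative_at frechet_derivative_works has_derivative_add)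

lemma frechet_derivative_diff_at:
  "f differentiable (at x) \<Longrightarrow> g differentiable (at x) \<Longrightarrow>
    frechet_derivative (\<lambda>x. f x - g x) (at x) b = frechet_derivative f (at x) b - frechet_derivative g (at x) b"
  by (metis (no_types) frechet_derivative_at frechet_derivative_works has_derivative_diff)

lemma frechet_derivative_bilinear_at:
  fixes prod :: "'b::real_normed_vector \<Rightarrow> 'c::real_normed_vector \<Rightarrow> 'd::real_normed_vector"
  assumes prod: "bounded_bilinear prod"
    and f: "f differentiable (at x)" and g: "g differentiable (at x)"
  shows "frechet_derivative (\<lambda>x. prod (f x) (g x)) (at x) b =
    prod (f x) (frechet_derivative g (at x) b) + prod (frechet_derivative f (at x) b) (g x)"
proof -
  have "((\<lambda>x. prod (f x) (g x)) has_derivative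
      (\<lambda>h. prod (f x) (frechet_derivative g (at x) h) + prod (frechet_derivative f (at x) h) (g x))) (at x)"
    by (rule bounded_bilinear.FDERIV[OF prod]) (use f g frechet_derivative_works in blast)+
  then show ?thesis
    by (simp add: frechet_derivative_at[symmetric])
qed

lemma Ck_add: "Ck k u \<Longrightarrow> Ck k v \<Longrightarrow> Ck k (\<lambda>x. u x + v x)"
  by (induction k arbitrary: u v)
    (auto simp: Ck_0_iff Ck_Suc_iff frechet_derivative_add_at continuous_on_add)

lemma Ck_diff: "Ck k u \<Longrightarrow> Ck k v \<Longrightarrow> Ck k (\<lambda>x. u x - v x)"
  by (induction k arbitrary: u v)
    (auto simp: Ck_0_iff Ck_Suc_iff frechet_derivative_diff_at continuous_on_diff)

lemma Ck_sum: "finite S \<Longrightarrow> (\<And>i. i \<in> S \<Longrightarrow> Ck k (u i)) \<Longrightarrow> Ck k (\<lambda>x. \<Sum>i\<in>S. u i x)"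
  by (induction S rule: finite_induct) (auto intro: Ck_add Ck_const)

lemma Ck_bounded_bilinear:
  fixes prod :: "'b::real_normed_vector \<Rightarrow> 'c::real_normed_vector \<Rightarrow> 'd::real_normed_vector"
    and u :: "'a::euclidean_space \<Rightarrow> 'b"
  assumes prod: "bounded_bilinear prod"
  shows "Ck k u \<Longrightarrow> Ck k v \<Longrightarrow> Ck k (\<lambda>x. prod (u x) (v x))"
proof (induction k arbitrary: u v)
  case 0
  then show ?case
    by (simp add: Ck_0_iff bounded_bilinear.continuous_on[OF prod])
next
  case (Suc k)
  then have du: "\<forall>x. u differentiable (at x)" and dv: "\<forall>x. v differentiable (at x)"
    by (simp_all add: Ck_Suc_iff)
  have d: "(\<lambda>x. prod (u x) (v x)) differentiable (at x)" for x
    using du dv bounded_bilinear.FDERIV[OF prod] unfolding differentiable_def by blast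
  then have "continuous_on UNIV (\<lambda>x. prod (u x) (v x))"
    by (simp add: differentiable_imp_continuous_within continuous_at_imp_continuous_on)
  moreover have "Ck k (\<lambda>x. frechet_derivative (\<lambda>x. prod (u x) (v x)) (at x) b)" if "b \<in> Basis" for b
  proof -
    have "Ck k u" "Ck k v" "Ck k (\<lambda>x. frechet_derivative u (at x) b)"
      "Ck k (\<lambda>x. frechet_derivative v (at x) b)"
      using Suc.prems that Ck_mono[of "Suc k" _ k] by (auto simp: Ck_Suc_iff)
    then show ?thesis
      unfolding frechet_derivative_bilinear_at[OF prod du[rule_format] dv[rule_format]]
      by (intro Ck_add Suc.IH)
  qed
  ultimately show ?case
    using d by (simp add: Ck_Suc_iff)
qed

lemma lie_bracket_eq_sum_Basis:
  fixes V W :: "'a::euclidean_space \<Rightarrow> 'a"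
  assumes "V differentiable (at x)" "W differentiable (at x)"
  shows "lie_bracket V W x = (\<Sum>b\<in>Basis. (V x \<bullet> b) *\<^sub>R frechet_derivative W (at x) b)
    - (\<Sum>b\<in>Basis. (W x \<bullet> b) *\<^sub>R frechet_derivative V (at x) b)"
proof -
  have expand: "frechet_derivative U (at x) v = (\<Sum>b\<in>Basis. (v \<bullet> b) *\<^sub>R frechet_derivative U (at x) b)"
    if "U differentiable (at x)" for U :: "'a \<Rightarrow> 'a" and v
  proof -
    have "frechet_derivative U (at x) v = frechet_derivative U (at x) (\<Sum>b\<in>Basis. (v \<bullet> b) *\<^sub>R b)"
      by (simp add: euclidean_representation)
    then show ?thesis
      using linear_frechet_derivative[OF that] by (simp add: linear_sum linear_cmul)
  qed
  show ?thesis
    unfolding lie_bracket_def using assms by (simp add: expand)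
qed

lemma Ck_lie_bracket:
  fixes V W :: "'a::euclidean_space \<Rightarrow> 'a"
  assumes V: "Ck (Suc k) V" and W: "Ck (Suc k) W"
  shows "Ck k (lie_bracket V W)"
proof -
  have coord: "Ck k (\<lambda>x. U x \<bullet> b)" if "Ck (Suc k) U" for U :: "'a \<Rightarrow> 'a" and b
  proof -
    have "Ck k U" using that Ck_mono by fastforce
    then show ?thesis using Ck_bounded_bilinear[OF bounded_bilinear_inner _ Ck_const] by blast
  qed
  have partial: "Ck k (\<lambda>x. frechet_derivative U (at x) b)" if "Ck (Suc k) U" "b \<in> Basis"
    for U :: "'a \<Rightarrow> 'a" and b
    using that by (simp add: Ck_Suc_iff)
  have expansion: "lie_bracket V W = (\<lambda>x. (\<Sum>b\<in>Basis. (V x \<bullet> b) *\<^sub>R frechet_derivative W (at x) b)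
      - (\<Sum>b\<in>Basis. (W x \<bullet> b) *\<^sub>R frechet_derivative V (at x) b))"
    using V W by (simp add: fun_eq_iff lie_bracket_eq_sum_Basis Ck_Suc_differentiable)
  show ?thesis
    unfolding expansion
    by (intro Ck_diff Ck_sum finite_Basis Ck_bounded_bilinear[OF bounded_bilinear_scaleR]
        coord[OF V] coord[OF W] partial[OF V] partial[OF W])
qed

lemma Ck_bracket_eval:
  "\<forall>(i, d) \<in> set (leaf_depths b). Ck (d + k) (g i) \<Longrightarrow> Ck k (bracket_eval g b)"
proof (induction b arbitrary: k)
  case (Ind i)
  then show ?case by simp
next
  case (Br b1 b2)
  have "Ck (Suc k) (bracket_eval g b1)" "Ck (Suc k) (bracket_eval g b2)"
    by (rule Br.IH; use Br.prems in force)+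
  then show ?case by (simp add: Ck_lie_bracket)
qed

lemma adm_brackets_Ck: "B \<in> adm_brackets k I g \<Longrightarrow> Ck k B"
  unfolding adm_brackets_def using Ck_bracket_eval by fastforce

lemma adm_brackets_antimono: "j \<le> k \<Longrightarrow> adm_brackets k I g \<subseteq> adm_brackets j I g"
  unfolding adm_brackets_def by (fastforce intro: Ck_mono)

lemma lie_bracket_in_adm_brackets:
  assumes g: "\<forall>j\<in>I. Ck (Suc k) (g j)" and i: "i \<in> I"
    and B: "B \<in> adm_brackets (Suc k) I g \<union> g ` I"
  shows "lie_bracket (g i) B \<in> adm_brackets k I g"
  using B
proof
  assume "B \<in> adm_brackets (Suc k) I g"
  then obtain b where "B = bracket_eval g b" "\<exists>b1 b2. b = Br b1 b2"
    "\<forall>(j, d) \<in> set (leaf_depths b). j \<in> I \<and> Ck (d + Suc k) (g j)"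
    unfolding adm_brackets_def by blast
  with g i show ?thesis
    unfolding adm_brackets_def by (intro CollectI exI[of _ "Br (Ind i) b"]) auto
next
  assume "B \<in> g ` I"
  then obtain j where "j \<in> I" "B = g j" by blast
  with g i show ?thesis
    unfolding adm_brackets_def by (intro CollectI exI[of _ "Br (Ind i) (Ind j)"]) auto
qed

lemma lie_bracket_at:
  "(V has_derivative DV) (at x) \<Longrightarrow> (W has_derivative DW) (at x) \<Longrightarrow>
    lie_bracket V W x = DW (V x) - DV (W x)"
  by (simp add: lie_bracket_def frechet_derivative_at[symmetric])

lemma inner_vanishing_along_curve:
  fixes p :: "real \<Rightarrow> 'b::real_inner" and y :: "real \<Rightarrow> 'a::real_normed_vector"
    and B :: "'a \<Rightarrow> 'b"
  assumes "0 < S" "s \<in> {0..S}"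
    and p: "(p has_vector_derivative q) (at s within {0..S})"
    and y: "(y has_vector_derivative v) (at s within {0..S})"
    and B: "(B has_derivative DB) (at (y s))"
    and zero: "\<forall>t\<in>{0..S}. p t \<bullet> B (y t) = 0"
  shows "p s \<bullet> DB v + q \<bullet> B (y s) = 0"
proof -
  have "((\<lambda>t. p t \<bullet> B (y t)) has_derivative (\<lambda>h. p s \<bullet> DB (h *\<^sub>R v) + (h *\<^sub>R q) \<bullet> B (y s)))
      (at s within {0..S})"
    using has_derivative_inner[OF p[unfolded has_vector_derivative_def]
        has_derivative_compose[OF y[unfolded has_vector_derivative_def] B]] .
  moreover have "(\<lambda>h. p s \<bullet> DB (h *\<^sub>R v) + (h *\<^sub>R q) \<bullet> B (y s)) = (\<lambda>h. h *\<^sub>R (p s \<bullet> DB v + q \<bullet> B (y s)))"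
    using linear_cmul[OF has_derivative_linear[OF B]] by (simp add: fun_eq_iff distrib_left)
  ultimately have "((\<lambda>t. p t \<bullet> B (y t)) has_vector_derivative (p s \<bullet> DB v + q \<bullet> B (y s)))
      (at s within cbox 0 S)"
    by (simp add: has_vector_derivative_def)
  moreover have "((\<lambda>t. p t \<bullet> B (y t)) has_vector_derivative 0) (at s within cbox 0 S)"
    by (rule has_vector_derivative_transform[where f="\<lambda>_. 0"]) (use \<open>s \<in> {0..S}\<close> zero in auto)
  ultimately show ?thesis
    using vector_derivative_unique_within_closed_interval[OF \<open>0 < S\<close>] \<open>s \<in> {0..S}\<close> by simp
qed

lemma Hfun_gradient_inner:
  fixes f :: "real^'n \<Rightarrow> 'a \<Rightarrow> real^'n" and g :: "'m::finite \<Rightarrow> real^'n \<Rightarrow> real^'n"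
  assumes H: "GDERIV (\<lambda>x. Hfun f g l0 l1h x p0 P \<pi> lam w0 w a) x :> G"
    and f: "((\<lambda>x. f x a) has_derivative Df) (at x)"
    and g: "\<And>i. (g i has_derivative Dg i) (at x)"
    and l0: "GDERIV (\<lambda>x. l0 x a) x :> l0x"
    and l1h: "GDERIV (\<lambda>x. l1h x w0 w) x :> l1hx"
  shows "G \<bullet> v = P \<bullet> (w0 *\<^sub>R Df v + (\<Sum>i\<in>UNIV. (w $ i) *\<^sub>R Dg i v)) - lam * ((w0 *\<^sub>R l0x + l1hx) \<bullet> v)"
proof -
  have "((\<lambda>x. Hfun f g l0 l1h x p0 P \<pi> lam w0 w a) has_derivative
      (\<lambda>h. P \<bullet> (w0 *\<^sub>R Df h + (\<Sum>i\<in>UNIV. (w $ i) *\<^sub>R Dg i h)) - lam * ((h \<bullet> l0x) * w0 + h \<bullet> l1hx))) (at x)"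
    using f g l0 l1h unfolding Hfun_def ell_e_def gderiv_def
    by (auto intro!: derivative_eq_intros)
  from fun_cong[OF has_derivative_unique[OF H[unfolded gderiv_def] this], of v] show ?thesis
    by (simp add: inner_commute inner_add_right algebra_simps)
qed

lemma adjoint_lie_bracket_identity:
  fixes f :: "real^'n \<Rightarrow> 'a \<Rightarrow> real^'n" and g :: "'m::finite \<Rightarrow> real^'n \<Rightarrow> real^'n"
  assumes "0 < S" "s \<in> {0..S}"
    and adjoint: "(p has_vector_derivative - G) (at s within {0..S})"
    and H: "GDERIV (\<lambda>x. Hfun f g l0 l1h x p0 (p s) \<pi> lam w0 w a) (y s) :> G"
    and state: "(y has_vector_derivative (w0 *\<^sub>R f (y s) a + (\<Sum>i\<in>UNIV. (w $ i) *\<^sub>R g i (y s))))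
      (at s within {0..S})"
    and zero: "\<forall>t\<in>{0..S}. p t \<bullet> B (y t) = 0"
    and f: "((\<lambda>x. f x a) has_derivative Df) (at (y s))"
    and g: "\<And>i. g i differentiable (at (y s))"
    and B: "B differentiable (at (y s))"
    and l0: "GDERIV (\<lambda>x. l0 x a) (y s) :> l0x"
    and l1h: "GDERIV (\<lambda>x. l1h x w0 w) (y s) :> l1hx"
  shows "p s \<bullet> (w0 *\<^sub>R lie_bracket (\<lambda>x. f x a) B (y s)
      + (\<Sum>j\<in>UNIV. (w $ j) *\<^sub>R lie_bracket (g j) B (y s)))
    = - lam * ((w0 *\<^sub>R l0x + l1hx) \<bullet> B (y s))"
proof -
  define DB where "DB = frechet_derivative B (at (y s))"
  define Dg where "Dg i = frechet_derivative (g i) (at (y s))" for i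
  have DB: "(B has_derivative DB) (at (y s))" and Dg: "\<And>i. (g i has_derivative Dg i) (at (y s))"
    using B g frechet_derivative_works unfolding DB_def Dg_def by blast+
  have along: "p s \<bullet> DB (w0 *\<^sub>R f (y s) a + (\<Sum>i\<in>UNIV. (w $ i) *\<^sub>R g i (y s))) = G \<bullet> B (y s)"
    using inner_vanishing_along_curve[OF assms(1,2) adjoint state DB zero] by simp
  have gradient: "G \<bullet> B (y s) = p s \<bullet> (w0 *\<^sub>R Df (B (y s)) + (\<Sum>i\<in>UNIV. (w $ i) *\<^sub>R Dg i (B (y s))))
      - lam * ((w0 *\<^sub>R l0x + l1hx) \<bullet> B (y s))"
    using Hfun_gradient_inner[OF H f Dg l0 l1h] .
  have bracket_f: "lie_bracket (\<lambda>x. f x a) B (y s) = DB (f (y s) a) - Df (B (y s))"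
    and bracket_g: "\<And>j. lie_bracket (g j) B (y s) = DB (g j (y s)) - Dg j (B (y s))"
    using lie_bracket_at DB Dg f by blast+
  have DB_state: "DB (w0 *\<^sub>R f (y s) a + (\<Sum>i\<in>UNIV. (w $ i) *\<^sub>R g i (y s)))
      = w0 *\<^sub>R DB (f (y s) a) + (\<Sum>i\<in>UNIV. (w $ i) *\<^sub>R DB (g i (y s)))"
    using has_derivative_linear[OF DB] by (simp add: linear_add linear_sum linear_cmul)
  have "p s \<bullet> (w0 *\<^sub>R lie_bracket (\<lambda>x. f x a) B (y s)
      + (\<Sum>j\<in>UNIV. (w $ j) *\<^sub>R lie_bracket (g j) B (y s)))
    = p s \<bullet> DB (w0 *\<^sub>R f (y s) a + (\<Sum>i\<in>UNIV. (w $ i) *\<^sub>R g i (y s))) - G \<bullet> B (y s)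
      - lam * ((w0 *\<^sub>R l0x + l1hx) \<bullet> B (y s))"
    unfolding gradient DB_state bracket_f bracket_g
    by (simp add: inner_add_right inner_diff_right inner_sum_right scaleR_diff_right sum_subtractf
        algebra_simps)
  with along show ?thesis
    by simp
qed

lemma AE_adjoint_lie_bracket_identity:
  fixes f :: "real^'n \<Rightarrow> 'a::euclidean_space \<Rightarrow> real^'n" and g :: "'m::finite \<Rightarrow> real^'n \<Rightarrow> real^'n"
  assumes process: "st_process f g Cs A xc S w0 w \<alpha> y0 y \<beta>"
    and adjoint: "AE s in lebesgue_on {0..S}. \<exists>G.
      GDERIV (\<lambda>x. Hfun f g l0 l1h x p0 (p s) \<pi> lam (w0 s) (w s) (\<alpha> s)) (y s) :> G
      \<and> (p has_vector_derivative - G) (at s within {0..S})"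
    and f: "\<forall>x. \<forall>a\<in>A. ((\<lambda>x. f x a) has_derivative fx x a) (at x)"
    and g: "\<And>i x. g i differentiable (at x)"
    and l0: "\<forall>x. \<forall>a\<in>A. GDERIV (\<lambda>x. l0 x a) x :> l0x x a"
    and l1h: "\<forall>x. \<forall>w0\<ge>0. \<forall>w\<in>Cs. GDERIV (\<lambda>x. l1h x w0 w) x :> l1hx x w0 w"
    and B: "\<And>x. B differentiable (at x)"
    and zero: "\<forall>t\<in>{0..S}. p t \<bullet> B (y t) = 0"
    and zero_brackets: "\<forall>i\<in>I. \<forall>t\<in>{0..S}. p t \<bullet> lie_bracket (g i) B (y t) = 0"
  shows "AE s in lebesgue_on {0..S}.
    p s \<bullet> (w0 s *\<^sub>R lie_bracket (\<lambda>x. f x (\<alpha> s)) B (y s)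
      + (\<Sum>j\<in>UNIV - I. (w s $ j) *\<^sub>R lie_bracket (g j) B (y s)))
    = - lam * ((w0 s *\<^sub>R l0x (y s) (\<alpha> s) + l1hx (y s) (w0 s) (w s)) \<bullet> B (y s))"
proof -
  have "0 < S"
    and controls: "AE s in lebesgue_on {0..S}. 0 \<le> w0 s \<and> w s \<in> Cs \<and> \<alpha> s \<in> A"
    and state: "AE s in lebesgue_on {0..S}.
      (y has_vector_derivative (w0 s *\<^sub>R f (y s) (\<alpha> s) + (\<Sum>i\<in>UNIV. (w s $ i) *\<^sub>R g i (y s))))
        (at s within {0..S})"
    using process unfolding st_process_def by auto
  have "AE s in lebesgue_on {0..S}. s \<in> {0..S}"
    by (rule AE_I2) simp
  then show ?thesis
    using adjoint controls state
  proof eventually_elim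
    case (elim s)
    then obtain G where
      "GDERIV (\<lambda>x. Hfun f g l0 l1h x p0 (p s) \<pi> lam (w0 s) (w s) (\<alpha> s)) (y s) :> G"
      "(p has_vector_derivative - G) (at s within {0..S})"
      by blast
    from adjoint_lie_bracket_identity[OF \<open>0 < S\<close> _ this(2,1) _ zero] elim f g B l0 l1h
    have all: "p s \<bullet> (w0 s *\<^sub>R lie_bracket (\<lambda>x. f x (\<alpha> s)) B (y s)
        + (\<Sum>j\<in>UNIV. (w s $ j) *\<^sub>R lie_bracket (g j) B (y s)))
      = - lam * ((w0 s *\<^sub>R l0x (y s) (\<alpha> s) + l1hx (y s) (w0 s) (w s)) \<bullet> B (y s))"
      by blast
    have "(\<Sum>j\<in>UNIV. (w s $ j) *\<^sub>R lie_bracket (g j) B (y s)) =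
        (\<Sum>j\<in>UNIV - I. (w s $ j) *\<^sub>R lie_bracket (g j) B (y s)) +
        (\<Sum>j\<in>I. (w s $ j) *\<^sub>R lie_bracket (g j) B (y s))"
      by (rule sum.subset_diff) auto
    moreover have "p s \<bullet> (\<Sum>j\<in>I. (w s $ j) *\<^sub>R lie_bracket (g j) B (y s)) = 0"
      using zero_brackets elim(1) by (simp add: inner_sum_right)
    ultimately show ?case
      using all by (simp add: inner_add_right)
  qed
qed

theorem mainTheorem5:
  fixes f :: "real^'n \<Rightarrow> real^'q \<Rightarrow> real^'n"
    and fx :: "real^'n \<Rightarrow> real^'q \<Rightarrow> (real^'n) \<Rightarrow>\<^sub>L (real^'n)"
    and g :: "'m::finite \<Rightarrow> real^'n \<Rightarrow> real^'n"
    and I1 :: "'m set"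
    and C1 C2 Cs :: "(real^'m) set"
    and A :: "(real^'q) set"
    and T :: "(real \<times> (real^'n)) set"
    and K :: ereal
    and xc :: "real^'n"
    and l0 :: "real^'n \<Rightarrow> real^'q \<Rightarrow> real"
    and l0x :: "real^'n \<Rightarrow> real^'q \<Rightarrow> real^'n"
    and l1 :: "real^'n \<Rightarrow> real^'m \<Rightarrow> real"
    and l1h :: "real^'n \<Rightarrow> real \<Rightarrow> real^'m \<Rightarrow> real"
    and l1hx :: "real^'n \<Rightarrow> real \<Rightarrow> real^'m \<Rightarrow> real^'n"
    and Psi :: "real \<times> (real^'n) \<Rightarrow> real"
    and gradPsi :: "real \<times> (real^'n) \<Rightarrow> real \<times> (real^'n)"
    and Sb :: real and w0b :: "real \<Rightarrow> real" and wb :: "real \<Rightarrow> real^'m"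
    and \<alpha>b :: "real \<Rightarrow> real^'q" and y0b :: "real \<Rightarrow> real" and yb :: "real \<Rightarrow> real^'n"
    and \<beta>b :: "real \<Rightarrow> real"
    and \<Gamma> :: "(real \<times> (real^'n)) set"
    and C :: "'c::euclidean_space set" and L :: "'c \<Rightarrow> real \<times> (real^'n)"
    and V :: "'c set" and F :: "'c \<Rightarrow> real \<times> (real^'n)"
    and p0 :: real and p :: "real \<Rightarrow> real^'n" and \<pi> :: real and lam :: real
  assumes T_closed: "closed T"
    and A_compact: "compact A"
    \<comment> \<open>the cone C = C1 x C2, C1 on the coordinates I1, C2 on the remaining ones\<close>
    and C1_closed: "closed C1" and C1_cone: "cone C1"
    and C1_sub: "C1 \<subseteq> {v. \<forall>i. i \<notin> I1 \<longrightarrow> v $ i = 0}"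
    and C1_lines: "\<forall>i\<in>I1. \<forall>t::real. t *\<^sub>R axis i 1 \<in> C1"
    and C2_closed: "closed C2" and C2_cone: "cone C2"
    and C2_sub: "C2 \<subseteq> {v. \<forall>i\<in>I1. v $ i = 0}"
    and C2_noline: "\<forall>v. (\<forall>t::real. t *\<^sub>R v \<in> C2) \<longrightarrow> v = 0"
    and Cs_def: "Cs = {u + v | u v. u \<in> C1 \<and> v \<in> C2}"
    \<comment> \<open>regularity of the data\<close>
    and f_cont: "continuous_on (UNIV \<times> A) (\<lambda>(x, a). f x a)"
    and f_deriv: "\<forall>x. \<forall>a\<in>A. ((\<lambda>x. f x a) has_derivative blinfun_apply (fx x a)) (at x)"
    and fx_cont: "continuous_on (UNIV \<times> A) (\<lambda>(x, a). fx x a)"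
    and g_C1: "\<forall>i. Ck 1 (g i)"
    and l0_cont: "continuous_on (UNIV \<times> A) (\<lambda>(x, a). l0 x a)"
    and l0_deriv: "\<forall>x. \<forall>a\<in>A. GDERIV (\<lambda>x. l0 x a) x :> l0x x a"
    and l0x_cont: "continuous_on (UNIV \<times> A) (\<lambda>(x, a). l0x x a)"
    and l1h_lim: "\<forall>x. \<forall>w0\<ge>0. \<forall>w\<in>Cs.
                    ((\<lambda>r. r * l1 x (w /\<^sub>R r)) \<longlongrightarrow> l1h x w0 w) (at w0 within {0<..})"
    and l1h_cont: "continuous_on (UNIV \<times> {0..} \<times> Cs) (\<lambda>(x, w0, w). l1h x w0 w)"
    and l1h_deriv: "\<forall>x. \<forall>w0\<ge>0. \<forall>w\<in>Cs. GDERIV (\<lambda>x. l1h x w0 w) x :> l1hx x w0 w"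
    and l1hx_cont: "continuous_on (UNIV \<times> {0..} \<times> Cs) (\<lambda>(x, w0, w). l1hx x w0 w)"
    and Psi_deriv: "\<forall>z. GDERIV Psi z :> gradPsi z"
    and gradPsi_cont: "continuous_on UNIV gradPsi"
    and K_pos: "0 < K"
    \<comment> \<open>extra hypothesis of the theorem\<close>
    and l1h_zero: "\<forall>x. \<forall>w\<in>Cs. l1h x 0 w = 0"
    \<comment> \<open>canonical local minimizer with slack in the L1-bound\<close>
    and locmin: "st_local_min f g Cs A xc T K Psi l0 l1h Sb w0b wb \<alpha>b y0b yb \<beta>b"
    and canon: "canonical Sb w0b wb"
    and slack: "ereal (\<beta>b Sb) < K"
    \<comment> \<open>Gamma is a Boltyanski approximating cone of T at the endpoint\<close>
    and bolt: "boltyanski_witness \<Gamma> T (y0b Sb, yb Sb) C L V F"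
    \<comment> \<open>(MP)\<close>
    and p_ac: "ac_on 0 Sb p"
    and pi_nonpos: "\<pi> \<le> 0" and lam_nonneg: "0 \<le> lam"
    and nontriv: "p0 \<noteq> 0 \<or> (\<exists>s\<in>{0..Sb}. p s \<noteq> 0) \<or> lam \<noteq> 0"
    and transv: "\<exists>\<nu>\<in>polar_cone \<Gamma>. (p0, p Sb) = - (lam *\<^sub>R gradPsi (y0b Sb, yb Sb)) - \<nu>"
    and adjoint: "AE s in lebesgue_on {0..Sb}. \<exists>G.
                    GDERIV (\<lambda>x. Hfun f g l0 l1h x p0 (p s) \<pi> lam (w0b s) (wb s) (\<alpha>b s)) (yb s) :> G
                    \<and> (p has_vector_derivative - G) (at s within {0..Sb})"
    and maxim: "AE s in lebesgue_on {0..Sb}.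
                  Hfun f g l0 l1h (yb s) p0 (p s) \<pi> lam (w0b s) (wb s) (\<alpha>b s)
                  = Hmax f g l0 l1h Cs A (yb s) p0 (p s) \<pi> lam"
    and Hzero: "\<forall>s\<in>{0..Sb}. Hmax f g l0 l1h Cs A (yb s) p0 (p s) \<pi> lam = 0"
    \<comment> \<open>(HO)\<close>
    and HO1: "\<forall>s\<in>{0..Sb}. \<forall>i\<in>I1. p s \<bullet> g i (yb s) = 0"
    and HO2: "\<forall>s\<in>{0..Sb}. \<forall>B\<in>adm_brackets 0 I1 g. p s \<bullet> B (yb s) = 0"
    \<comment> \<open>the multiplier has pi = 0\<close>
    and pi_zero: "\<pi> = 0"
  shows "(\<forall>B \<in> adm_brackets 1 I1 g \<union> g ` I1.
            AE s in lebesgue_on {0..Sb}.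
              p s \<bullet> (w0b s *\<^sub>R lie_bracket (\<lambda>x. f x (\<alpha>b s)) B (yb s)
                      + (\<Sum>j\<in>UNIV - I1. (wb s $ j) *\<^sub>R lie_bracket (g j) B (yb s)))
              = - lam * ((w0b s *\<^sub>R l0x (yb s) (\<alpha>b s) + l1hx (yb s) (w0b s) (wb s)) \<bullet> B (yb s)))
       \<and> (I1 = UNIV \<longrightarrow>
           (\<forall>B \<in> adm_brackets 1 I1 g \<union> g ` I1.
              (AE s in lebesgue_on {0..Sb}.
                 lam * ((w0b s *\<^sub>R l0x (yb s) (\<alpha>b s) + l1hx (yb s) (w0b s) (wb s)) \<bullet> B (yb s)) = 0)
              \<longrightarrow> (AE s in lebesgue_on {0..Sb}.
                     p s \<bullet> (w0b s *\<^sub>R lie_bracket (\<lambda>x. f x (\<alpha>b s)) B (yb s)) = 0)))"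
proof -
  have process: "st_process f g Cs A xc Sb w0b wb \<alpha>b y0b yb \<beta>b"
    using locmin unfolding st_local_min_def by blast
  have C1_differentiable: "F differentiable (at x)" if "Ck 1 F" for F :: "real^'n \<Rightarrow> real^'n" and x
    using that Ck_Suc_differentiable[of 0 F x] by simp
  have vanishing: "\<forall>t\<in>{0..Sb}. p t \<bullet> B (yb t) = 0" if "B \<in> adm_brackets 0 I1 g \<union> g ` I1" for B
    using that HO1 HO2 by blast
  have identity: "\<forall>B \<in> adm_brackets 1 I1 g \<union> g ` I1.
      AE s in lebesgue_on {0..Sb}.
        p s \<bullet> (w0b s *\<^sub>R lie_bracket (\<lambda>x. f x (\<alpha>b s)) B (yb s)
          + (\<Sum>j\<in>UNIV - I1. (wb s $ j) *\<^sub>R lie_bracket (g j) B (yb s)))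
        = - lam * ((w0b s *\<^sub>R l0x (yb s) (\<alpha>b s) + l1hx (yb s) (w0b s) (wb s)) \<bullet> B (yb s))"
  proof (rule ballI, rule AE_adjoint_lie_bracket_identity[OF process adjoint f_deriv _ l0_deriv l1h_deriv])
    fix B
    assume B: "B \<in> adm_brackets 1 I1 g \<union> g ` I1"
    show "g i differentiable (at x)" for i x
      using C1_differentiable g_C1 by blast
    show "B differentiable (at x)" for x
      using B adm_brackets_Ck g_C1 C1_differentiable by blast
    show "\<forall>t\<in>{0..Sb}. p t \<bullet> B (yb t) = 0"
      using B adm_brackets_antimono[of 0 1] vanishing by blast
    show "\<forall>i\<in>I1. \<forall>t\<in>{0..Sb}. p t \<bullet> lie_bracket (g i) B (yb t) = 0"
      using B g_C1 lie_bracket_in_adm_brackets[of I1 0 g] vanishing by simp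
  qed
  show ?thesis
  proof (rule conjI[OF identity], intro impI ballI)
    fix B
    assume "I1 = UNIV" and B: "B \<in> adm_brackets 1 I1 g \<union> g ` I1"
      and no_cost: "AE s in lebesgue_on {0..Sb}.
        lam * ((w0b s *\<^sub>R l0x (yb s) (\<alpha>b s) + l1hx (yb s) (w0b s) (wb s)) \<bullet> B (yb s)) = 0"
    from identity[rule_format, OF B] no_cost
    show "AE s in lebesgue_on {0..Sb}. p s \<bullet> (w0b s *\<^sub>R lie_bracket (\<lambda>x. f x (\<alpha>b s)) B (yb s)) = 0"
    proof eventually_elim
      case (elim s)
      with \<open>I1 = UNIV\<close> show ?case by simp
    qed
  qed
qed

end
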